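(* Let $p$ be a prime with $p\equiv5\pmod6$. Then $D^{p-1}(\mathbf{u})=H^2(\mathbf{u})$ for every $\mathbf{u}\in\mathbb{Z}_p^3$, i.e. $D^{p-1}(x_1,x_2,x_3)=(x_3,x_1,x_2)$.
   Context: The Ducci function $D:\mathbb{Z}_p^3\to\mathbb{Z}_p^3$ is $D(x_1,x_2,x_3)=(x_1+x_2,\,x_2+x_3,\,x_3+x_1)$, entries mod $p$. $H(x_1,x_2,x_3)=(x_2,x_3,x_1)$. *)

theory Defs
  imports "HOL-Computational_Algebra.Primes"
begin

text \<open>Elements of Z_p are represented by natural numbers in {0..<p}; triples in Z_p^3
  are triples of such numbers.\<close>

definition ducci :: "nat \<Rightarrow> nat \<times> nat \<times> nat \<Rightarrow> nat \<times> nat \<times> nat" where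
  "ducci p u = (case u of (x1, x2, x3) \<Rightarrow> ((x1 + x2) mod p, (x2 + x3) mod p, (x3 + x1) mod p))"

definition shiftH :: "nat \<times> nat \<times> nat \<Rightarrow> nat \<times> nat \<times> nat" where
  "shiftH u = (case u of (x1, x2, x3) \<Rightarrow> (x2, x3, x1))"

definition Zp3 :: "nat \<Rightarrow> (nat \<times> nat \<times> nat) set" where
  "Zp3 p = {(x1, x2, x3). x1 < p \<and> x2 < p \<and> x3 < p}"

end

theory Submission
  imports Defs "HOL-Number_Theory.Cong"
begin

text \<open>Write \<open>D = I + H\<close> as operators on \<open>\<int>\<^sub>p\<^sup>3\<close>. Since \<open>I\<close> and \<open>H\<close> commute and \<open>p\<close> divides
  the inner binomial coefficients, \<open>D\<^sup>p = I + H\<^sup>p\<close> (freshman's dream), and \<open>H\<^sup>p = H\<^sup>2\<close>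
  because \<open>H\<^sup>3 = I\<close> and \<open>p \<equiv> 2 (mod 3)\<close>. Hence \<open>D (D\<^sup>p\<^sup>-\<^sup>1 u) = u + H\<^sup>2 u = D (H\<^sup>2 u)\<close>.
  Finally \<open>D\<close> is injective for odd \<open>p\<close>: the three pairwise sums of \<open>(x\<^sub>1, x\<^sub>2, x\<^sub>3)\<close>
  determine each \<open>2 x\<^sub>i\<close>.\<close>

text \<open>Components are indexed from 0 and cyclically: \<open>coord u 0\<close> is \<open>x\<^sub>1\<close>, and \<open>coord u 3\<close> is again \<open>x\<^sub>1\<close>.\<close>

definition coord :: "nat \<times> nat \<times> nat \<Rightarrow> nat \<Rightarrow> nat" where
  "coord u j = (if j mod 3 = 0 then fst u else if j mod 3 = 1 then fst (snd u) else snd (snd u))"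

lemma coord_mod_3: "coord u (j mod 3) = coord u j"
  by (simp add: coord_def)

lemma coord_add_3: "coord u (j + 3) = coord u j"
  by (simp add: coord_def)

lemma coord_eqI:
  assumes "\<And>j. coord u j = coord v j"
  shows "u = v"
  using assms[of 0] assms[of 1] assms[of 2] by (simp add: coord_def prod_eq_iff)

lemma coord_ducci: "coord (ducci p u) j = (coord u j + coord u (Suc j)) mod p"
proof -
  obtain a b c where "u = (a, b, c)"
    by (cases u) auto
  moreover have "j mod 3 = 0 \<or> j mod 3 = 1 \<or> j mod 3 = 2"
    by auto
  ultimately show ?thesis
    by (auto simp: coord_def ducci_def mod_Suc add.commute)
qed

lemma coord_shiftH: "coord (shiftH u) j = coord u (Suc j)"
proof -
  obtain a b c where "u = (a, b, c)"
    by (cases u) auto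
  moreover have "j mod 3 = 0 \<or> j mod 3 = 1 \<or> j mod 3 = 2"
    by auto
  ultimately show ?thesis
    by (auto simp: coord_def shiftH_def mod_Suc)
qed

lemma coord_shiftH_pow: "coord ((shiftH ^^ n) u) j = coord u (j + n)"
  by (induction n arbitrary: j) (simp_all add: coord_shiftH)

lemma ducci_pow_in_Zp3: "p > 0 \<Longrightarrow> u \<in> Zp3 p \<Longrightarrow> (ducci p ^^ n) u \<in> Zp3 p"
  by (induction n) (auto simp: Zp3_def ducci_def split: prod.split)

lemma shiftH_pow_in_Zp3: "u \<in> Zp3 p \<Longrightarrow> (shiftH ^^ n) u \<in> Zp3 p"
  by (induction n) (auto simp: Zp3_def shiftH_def)

lemma sum_choose_Suc:
  fixes f :: "nat \<Rightarrow> 'a :: comm_semiring_1"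
  shows "(\<Sum>k\<le>Suc n. of_nat (Suc n choose k) * f k) =
    (\<Sum>k\<le>n. of_nat (n choose k) * f k) + (\<Sum>k\<le>n. of_nat (n choose k) * f (Suc k))"
proof -
  have "(\<Sum>k\<le>Suc n. of_nat (Suc n choose k) * f k) =
      f 0 + (\<Sum>k\<le>n. of_nat (Suc n choose Suc k) * f (Suc k))"
    by (simp only: sum.atMost_Suc_shift) simp
  also have "\<dots> = (f 0 + (\<Sum>k\<le>n. of_nat (n choose Suc k) * f (Suc k)))
      + (\<Sum>k\<le>n. of_nat (n choose k) * f (Suc k))"
    by (simp add: sum.distrib distrib_right add_ac)
  also have "f 0 + (\<Sum>k\<le>n. of_nat (n choose Suc k) * f (Suc k)) = (\<Sum>k\<le>n. of_nat (n choose k) * f k)"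
    using sum.atMost_Suc_shift[of "\<lambda>k. of_nat (n choose k) * f k" n] by (simp add: binomial_eq_0)
  finally show ?thesis .
qed

lemma sum_choose_prime_cong:
  assumes "prime p"
  shows "[\<Sum>k\<le>p. (p choose k) * f k = f 0 + f p] (mod p)"
proof -
  have "[\<Sum>k\<le>p. (p choose k) * f k = \<Sum>k\<le>p. if k = 0 \<or> k = p then f k else 0] (mod p)"
  proof (rule cong_sum)
    fix k assume "k \<in> {..p}"
    moreover have "p dvd (p choose k)" if "0 < k" "k < p"
      using that assms by (intro dvd_choose_prime) auto
    ultimately show "[(p choose k) * f k = (if k = 0 \<or> k = p then f k else 0)] (mod p)"
      by (auto simp: cong_0_iff)
  qed
  moreover have "{..p} \<inter> {k. k = 0 \<or> k = p} = {0, p}"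
    by auto
  ultimately show ?thesis
    using prime_gt_0_nat[OF assms] by (simp add: sum.If_cases)
qed

lemma coord_ducci_pow_cong:
  "[coord ((ducci p ^^ n) u) j = \<Sum>k\<le>n. (n choose k) * coord u (j + k)] (mod p)"
proof (induction n arbitrary: j)
  case 0
  then show ?case
    by simp
next
  case (Suc n)
  have "[coord ((ducci p ^^ Suc n) u) j =
      coord ((ducci p ^^ n) u) j + coord ((ducci p ^^ n) u) (Suc j)] (mod p)"
    by (simp add: coord_ducci)
  also have "[coord ((ducci p ^^ n) u) j + coord ((ducci p ^^ n) u) (Suc j) =
      (\<Sum>k\<le>n. (n choose k) * coord u (j + k))
      + (\<Sum>k\<le>n. (n choose k) * coord u (Suc j + k))] (mod p)"
    by (intro cong_add Suc.IH)
  also have "(\<Sum>k\<le>n. (n choose k) * coord u (j + k)) + (\<Sum>k\<le>n. (n choose k) * coord u (Suc j + k))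
      = (\<Sum>k\<le>Suc n. (Suc n choose k) * coord u (j + k))"
    using sum_choose_Suc[of n "\<lambda>k. coord u (j + k)"] by simp
  finally show ?case .
qed

lemma coord_ducci_pow_prime:
  assumes "prime p"
  shows "coord ((ducci p ^^ p) u) j = (coord u j + coord u (j + p)) mod p"
proof -
  obtain n where n: "p = Suc n"
    using prime_gt_0_nat[OF assms] gr0_implies_Suc by blast
  have "[coord ((ducci p ^^ p) u) j = coord u j + coord u (j + p)] (mod p)"
    using coord_ducci_pow_cong[of p p u j] sum_choose_prime_cong[OF assms, of "\<lambda>k. coord u (j + k)"]
    by (auto elim: cong_trans)
  moreover have "coord ((ducci p ^^ p) u) j < p"
    using n by (simp add: coord_ducci)
  ultimately show ?thesis
    by (simp add: cong_def)
qed

lemma ducci_pow_prime: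
  assumes "prime p" and "p mod 3 = 2"
  shows "(ducci p ^^ p) u = ducci p ((shiftH ^^ 2) u)"
proof (rule coord_eqI)
  fix j
  have "coord ((ducci p ^^ p) u) j = (coord u j + coord u (j + p)) mod p"
    using assms(1) by (rule coord_ducci_pow_prime)
  also have "coord u (j + p) = coord u (j + 2)"
    using assms(2) by (metis coord_mod_3 mod_add_right_eq)
  also have "coord u j = coord u (Suc j + 2)"
    using coord_add_3[of u j] by (simp only: add_Suc_shift numeral_3_eq_3 numeral_2_eq_2 add_Suc_right)
  also have "(coord u (Suc j + 2) + coord u (j + 2)) mod p = coord (ducci p ((shiftH ^^ 2) u)) j"
    by (simp only: coord_ducci coord_shiftH_pow add.commute)
  finally show "coord ((ducci p ^^ p) u) j = coord (ducci p ((shiftH ^^ 2) u)) j" .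
qed

lemma cong_of_pair_sums_cong:
  fixes p x y z x' y' z' :: nat
  assumes "odd p"
    and "[x + y = x' + y'] (mod p)" "[y + z = y' + z'] (mod p)" "[z + x = z' + x'] (mod p)"
  shows "[x = x'] (mod p)"
proof -
  have rearrange: "(a + b) + (c + a) = 2 * a + (b + c)" for a b c :: nat
    by simp
  have "[2 * x + (y + z) = 2 * x' + (y' + z')] (mod p)"
    using cong_add[OF assms(2) assms(4)] by (simp only: rearrange)
  also have "[2 * x' + (y' + z') = 2 * x' + (y + z)] (mod p)"
    using cong_add[OF cong_refl cong_sym[OF assms(3)]] .
  finally have "[2 * x = 2 * x'] (mod p)"
    by (simp add: cong_add_rcancel_nat)
  then show ?thesis
    using assms(1) by (simp add: cong_mult_lcancel_nat)
qed

lemma inj_on_ducci: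
  assumes "odd p"
  shows "inj_on (ducci p) (Zp3 p)"
proof (rule inj_onI)
  fix u v assume u: "u \<in> Zp3 p" and v: "v \<in> Zp3 p" and eq: "ducci p u = ducci p v"
  obtain a b c a' b' c' where uv: "u = (a, b, c)" "v = (a', b', c')"
    by (cases u, cases v) auto
  have sums: "[a + b = a' + b'] (mod p)" "[b + c = b' + c'] (mod p)" "[c + a = c' + a'] (mod p)"
    using eq by (simp_all add: uv ducci_def cong_def)
  have "[a = a'] (mod p)" "[b = b'] (mod p)" "[c = c'] (mod p)"
    using assms sums by (blast intro: cong_of_pair_sums_cong)+
  then show "u = v"
    using u v by (auto simp: uv Zp3_def intro: cong_less_modulus_unique_nat)
qed

theorem lemma4p3:
  fixes p :: nat
  assumes "prime p" and "p mod 6 = 5"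
  shows "\<forall>u \<in> Zp3 p. (ducci p ^^ (p - 1)) u = (shiftH ^^ 2) u"
proof
  fix u assume u: "u \<in> Zp3 p"
  have "odd p" "p mod 3 = 2" "p = Suc (p - 1)"
    using assms(2) by presburger+
  have "ducci p ((ducci p ^^ (p - 1)) u) = (ducci p ^^ p) u"
    by (subst (2) \<open>p = Suc (p - 1)\<close>) simp
  also have "\<dots> = ducci p ((shiftH ^^ 2) u)"
    using assms(1) \<open>p mod 3 = 2\<close> by (rule ducci_pow_prime)
  finally show "(ducci p ^^ (p - 1)) u = (shiftH ^^ 2) u"
    using inj_on_ducci[OF \<open>odd p\<close>] ducci_pow_in_Zp3[OF prime_gt_0_nat[OF assms(1)] u]
      shiftH_pow_in_Zp3[OF u] by (auto dest: inj_onD)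
qed

end
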